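(* Let $\mu$ be a stationary ergodic process on $[0,1]^{\mathbb N}$. For every $m\in\mathbb N$, \[\lim_{n,\ell\to\infty}\alpha_n^{\ell}(m)=\alpha(m).\]
   Context: Setting: $\mathscr X=[0,1]$ with its Borel $\sigma$-algebra; a process is a probability measure $\mu$ on $\mathscr X^{\mathbb N}$ (product Borel $\sigma$-algebra), $X_t$ the $t$-th coordinate. For $\sigma$-subalgebras $\mathfrak U,\mathfrak V$, $\alpha(\mathfrak U,\mathfrak V):=\sup_{U\in\mathfrak U,V\in\mathfrak V}|\mu(U\cap V)-\mu(U)\mu(V)|$, and the $\alpha$-mixing coefficients are $\alpha(m):=\sup_{j\in\mathbb N}\alpha\big(\sigma(X_1,\dots,X_j),\sigma(X_t:t\ge j+m)\big)$, $m\in\mathbb N$. Dyadic sets: for $\ell\in\mathbb N$ let $I_{\ell,i}=[i2^{-\ell},(i+1)2^{-\ell})$, $i=0,\dots,2^\ell-1$ (last interval closed, so they partition $[0,1]$); $\Delta_{k,\ell}$ is the set of the $2^{k\ell}$ cubes $I_{\ell,i_1}\times\cdots\times I_{\ell,i_k}\subseteq[0,1]^k$, and $\mathcal D_{k,\ell}$ is the family of all unions of cubes in $\Delta_{k,\ell}$. For $m,\ell\in\mathbb N$, $n>m$, $j\in\{1,\dots,n-m\}$, $j':=n-m-j+1$: \[\alpha_{n,j}^{\ell}(m):=\max_{A\in\mathcal D_{j,\ell},\,B\in\mathcal D_{j',\ell}}\Big|\mu\big((X_1,\dots,X_j)\in A,\ (X_{j+m},\dots,X_n)\in B\big)-\mu\big((X_1,\dots,X_j)\in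 A\big)\mu\big((X_{j+m},\dots,X_n)\in B\big)\Big|,\] and $\alpha_n^{\ell}(m):=\max_{j\in\{1,\dots,n-m\}}\alpha_{n,j}^{\ell}(m)$. The limit is the joint limit as both $n$ and $\ell$ tend to infinity. *)

theory Defs
  imports "HOL-Probability.Probability"
begin

text \<open>A process is a probability measure on sequences \<open>\<omega> :: nat \<Rightarrow> real\<close>
  with values in [0,1]. The paper's coordinate \<open>X_t\<close> (t = 1,2,...) is \<open>\<omega> (t - 1)\<close>.\<close>

definition coord :: "nat \<Rightarrow> (nat \<Rightarrow> real) \<Rightarrow> real" where
  "coord t \<omega> = \<omega> (t - 1)"

definition seq_space :: "(nat \<Rightarrow> real) measure" where
  "seq_space = (\<Pi>\<^sub>M i\<in>UNIV. restrict_space borel {0..1::real})"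

definition shift :: "(nat \<Rightarrow> real) \<Rightarrow> (nat \<Rightarrow> real)" where
  "shift \<omega> = (\<lambda>i. \<omega> (Suc i))"

definition stationary :: "(nat \<Rightarrow> real) measure \<Rightarrow> bool" where
  "stationary M \<longleftrightarrow> shift \<in> measurable M M \<and> distr M M shift = M"

definition ergodic :: "(nat \<Rightarrow> real) measure \<Rightarrow> bool" where
  "ergodic M \<longleftrightarrow> (\<forall>A\<in>sets M. shift -` A \<inter> space M = A \<longrightarrow> measure M A = 0 \<or> measure M A = 1)"

definition sigma_gen :: "(nat \<Rightarrow> real) measure \<Rightarrow> nat set \<Rightarrow> (nat \<Rightarrow> real) set set" where
  "sigma_gen M I = sigma_sets (space M)
     (\<Union>t\<in>I. {coord t -` B \<inter> space M | B. B \<in> sets borel})"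

definition alpha_sigma :: "(nat \<Rightarrow> real) measure \<Rightarrow> (nat \<Rightarrow> real) set set \<Rightarrow> (nat \<Rightarrow> real) set set \<Rightarrow> real" where
  "alpha_sigma M U V = (SUP p\<in>U \<times> V.
      \<bar>measure M (fst p \<inter> snd p) - measure M (fst p) * measure M (snd p)\<bar>)"

definition alpha_mix :: "(nat \<Rightarrow> real) measure \<Rightarrow> nat \<Rightarrow> real" where
  "alpha_mix M m = (SUP j\<in>{1..}. alpha_sigma M (sigma_gen M {1..j}) (sigma_gen M {j+m..}))"

definition dyad :: "nat \<Rightarrow> nat \<Rightarrow> real set" where
  "dyad l i = (if i = 2^l - 1 then {real i / 2^l .. (real i + 1) / 2^l}
               else {real i / 2^l ..< (real i + 1) / 2^l})"

text \<open>Points of [0,1]^k are represented as functions on {1..k} (extensional).\<close>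
definition dyad_cubes :: "nat \<Rightarrow> nat \<Rightarrow> (nat \<Rightarrow> real) set set" where
  "dyad_cubes k l = {(\<Pi>\<^sub>E q\<in>{1..k}. dyad l (c q)) | c. c \<in> {1..k} \<rightarrow>\<^sub>E {0..<2^l}}"

definition dyad_sets :: "nat \<Rightarrow> nat \<Rightarrow> (nat \<Rightarrow> real) set set" where
  "dyad_sets k l = {\<Union>C | C. C \<subseteq> dyad_cubes k l}"

definition block :: "nat \<Rightarrow> nat \<Rightarrow> (nat \<Rightarrow> real) \<Rightarrow> (nat \<Rightarrow> real)" where
  "block s k \<omega> = (\<lambda>q\<in>{1..k}. coord (s + q - 1) \<omega>)"

definition alpha_dyad_nj :: "(nat \<Rightarrow> real) measure \<Rightarrow> nat \<Rightarrow> nat \<Rightarrow> nat \<Rightarrow> nat \<Rightarrow> real" where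
  "alpha_dyad_nj M l m n j =
     (let j' = n - m - j + 1;
          EA = (\<lambda>A. {\<omega>\<in>space M. block 1 j \<omega> \<in> A});
          EB = (\<lambda>B. {\<omega>\<in>space M. block (j + m) j' \<omega> \<in> B})
      in Max ((\<lambda>(A, B). \<bar>measure M (EA A \<inter> EB B) - measure M (EA A) * measure M (EB B)\<bar>)
               ` (dyad_sets j l \<times> dyad_sets j' l)))"

definition alpha_dyad :: "(nat \<Rightarrow> real) measure \<Rightarrow> nat \<Rightarrow> nat \<Rightarrow> nat \<Rightarrow> real" where
  "alpha_dyad M l m n = Max ((\<lambda>j. alpha_dyad_nj M l m n j) ` {1..n - m})"

end

(*
  The dyadic coefficient is a maximum of |P(U \<inter> V) - P(U) P(V)| over pairs of events
  determined by the level-l dyadic cells of (X_1, ..., X_j) and of (X_{j+m}, ..., X_n); these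
  lie in the \<sigma>-algebras defining \<alpha>(m), so the dyadic coefficient never exceeds \<alpha>(m).
  Conversely, take (U, V) nearly attaining \<alpha>(m). The events determined by the dyadic cells of
  finitely many coordinates form increasing algebras generating \<sigma>(X_1, ..., X_j) and
  \<sigma>(X_t : t \<ge> j + m), so U and V are approximated in measure by such events, which are
  admissible once n and l are large; the gap |P(U \<inter> V) - P(U) P(V)| moves by at most twice
  the approximation errors.
*)

theory Submission
  imports Defs
begin

text \<open>The \<open>min\<close> puts \<open>x = 1\<close> into the last interval \<open>dyad l (2^l - 1)\<close>, which is closed.\<close>

definition dyad_index :: "nat \<Rightarrow> real \<Rightarrow> nat" where
  "dyad_index l x = min (nat \<lfloor>x * 2^l\<rfloor>) (2^l - 1)"

lemma dyad_index_less: "dyad_index l x < 2^l"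
  unfolding dyad_index_def by (simp add: min.strict_coboundedI2)

lemma nat_two_power: "nat ((2::int)^l) = 2^l"
  by (metis nat_int of_nat_numeral of_nat_power)

lemma dyad_index_one: "dyad_index l 1 = 2^l - 1"
  unfolding dyad_index_def by (simp add: nat_two_power)

lemma dyad_index_eq_floor:
  assumes "0 \<le> x" "x < 1"
  shows "dyad_index l x = nat \<lfloor>x * 2^l\<rfloor>"
proof -
  have "\<lfloor>x * 2^l\<rfloor> < 2^l"
    using assms by (simp add: floor_less_iff)
  then have "nat \<lfloor>x * 2^l\<rfloor> < 2^l"
    using assms by (simp add: nat_less_iff)
  then show ?thesis
    unfolding dyad_index_def by linarith
qed

lemma dyad_index_mem:
  assumes "0 \<le> x" "x \<le> 1"
  shows "x \<in> dyad l (dyad_index l x)"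
proof (cases "x = 1")
  case True
  then show ?thesis
    by (simp add: dyad_index_one dyad_def of_nat_diff field_simps)
next
  case False
  then have "x < 1" using assms by simp
  then have "real (dyad_index l x) = of_int \<lfloor>x * 2^l\<rfloor>"
    using assms dyad_index_eq_floor by simp
  then have "real (dyad_index l x) \<le> x * 2^l" "x * 2^l < real (dyad_index l x) + 1"
    by linarith+
  then show ?thesis
    unfolding dyad_def by (auto simp: field_simps)
qed

lemma dyad_index_unique:
  assumes "i < 2^l" "x \<in> dyad l i"
  shows "i = dyad_index l x"
proof (cases "i = 2^l - 1")
  case True
  then have "real i \<le> x * 2^l"
    using assms(2) unfolding dyad_def by (auto simp: field_simps)
  then have "i \<le> nat \<lfloor>x * 2^l\<rfloor>"
    by (simp add: le_nat_iff le_floor_iff)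
  then show ?thesis
    using True unfolding dyad_index_def by (simp add: min_def)
next
  case False
  then have "real i \<le> x * 2^l" "x * 2^l < real i + 1"
    using assms(2) unfolding dyad_def by (auto simp: field_simps)
  then have "\<lfloor>x * 2^l\<rfloor> = int i"
    by (simp add: floor_eq_iff)
  then show ?thesis
    using False assms(1) unfolding dyad_index_def by auto
qed

lemma dyad_index_div:
  assumes "0 \<le> x" "x \<le> 1" "l \<le> l'"
  shows "dyad_index l' x div 2^(l' - l) = dyad_index l x"
proof (cases "x = 1")
  case True
  define d :: nat where "d = 2^(l' - l)"
  have "d > 0" unfolding d_def by simp
  have "(2::nat)^l' = 2^l * d"
    using assms(3) unfolding d_def by (simp flip: power_add)
  then have "(2::nat)^l' - 1 = (2^l - 1) * d + (d - 1)"
    using \<open>d > 0\<close> by (simp add: algebra_simps)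
  also have "\<dots> div d = 2^l - 1"
    using \<open>d > 0\<close> by (intro div_nat_eqI) (auto simp: algebra_simps)
  finally have "(2^l' - 1) div d = 2^l - 1" .
  then show ?thesis
    using True by (simp add: dyad_index_one d_def)
next
  case False
  then have "x < 1" using assms by simp
  have "x * 2^l = x * 2^l' / real_of_int (2^(l' - l))"
    using assms(3) by (simp add: field_simps flip: power_add)
  then have "\<lfloor>x * 2^l\<rfloor> = \<lfloor>x * 2^l'\<rfloor> div 2^(l' - l)"
    by (simp add: floor_divide_real_eq_div del: of_int_power)
  then show ?thesis
    using assms \<open>x < 1\<close> by (simp add: dyad_index_eq_floor nat_div_distrib nat_two_power)
qed

lemma le_iff_dyad_lower_bounds:
  assumes "0 \<le> x" "x \<le> 1"
  shows "x \<le> a \<longleftrightarrow> (\<forall>l. real (dyad_index l x) / 2^l \<le> a)"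
proof -
  have bounds: "real (dyad_index l x) / 2^l \<le> x" "x \<le> real (dyad_index l x) / 2^l + (1/2)^l" for l
    using dyad_index_mem[OF assms, of l]
    unfolding dyad_def by (auto split: if_splits simp: field_simps power_divide)
  show ?thesis
  proof
    assume "\<forall>l. real (dyad_index l x) / 2^l \<le> a"
    then have "x \<le> a + (1/2)^l" for l
      using bounds(2)[of l] by (metis add_le_cancel_right order_trans)
    moreover have "(\<lambda>l. a + (1/2::real)^l) \<longlonglongrightarrow> a"
      using tendsto_add[OF tendsto_const LIMSEQ_power_zero[of "1/2::real"]] by simp
    ultimately show "x \<le> a"
      by (intro LIMSEQ_le_const[of "\<lambda>l. a + (1/2)^l"]) auto
  qed (use bounds(1) order_trans in blast)
qed

lemma (in finite_measure) measure_sym_diff_bound: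
  assumes "A \<in> sets M" "B \<in> sets M"
  shows "\<bar>measure M A - measure M B\<bar> \<le> measure M (sym_diff A B)"
proof -
  have "measure M A \<le> measure M (B \<union> sym_diff A B)" "measure M B \<le> measure M (A \<union> sym_diff A B)"
    using assms by (auto intro!: finite_measure_mono)
  moreover have "measure M (B \<union> sym_diff A B) \<le> measure M B + measure M (sym_diff A B)"
    "measure M (A \<union> sym_diff A B) \<le> measure M A + measure M (sym_diff A B)"
    using assms by (auto intro!: measure_subadditive)
  ultimately show ?thesis by linarith
qed

lemma (in finite_measure) measure_UN_approx_by_finite_UN:
  fixes a :: "nat \<Rightarrow> 'a set"
  assumes "range a \<subseteq> sets M" "0 < e"
  shows "\<exists>n. measure M (\<Union>i. a i) - measure M (\<Union>i<n. a i) < e"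
proof -
  have "(\<lambda>n. measure M (\<Union>i<n. a i)) \<longlonglongrightarrow> measure M (\<Union>n. \<Union>i<n. a i)"
    using assms(1) by (intro finite_Lim_measure_incseq) (force simp: incseq_def)+
  moreover have "(\<Union>n. \<Union>i<n. a i) = (\<Union>i. a i)" by blast
  ultimately obtain n where "norm (measure M (\<Union>i<n. a i) - measure M (\<Union>i. a i)) < e"
    using LIMSEQ_D[of _ _ e] assms(2) by (metis order_refl)
  then show ?thesis
    unfolding real_norm_def abs_less_iff by (intro exI[of _ n]) linarith
qed

lemma (in finite_measure) sigma_sets_approx_by_algebra:
  assumes "algebra (space M) A" "A \<subseteq> sets M"
    and "W \<in> sigma_sets (space M) A" "0 < e"
  shows "\<exists>W'\<in>A. measure M (sym_diff W W') < e"
proof -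
  interpret A: algebra "space M" A by fact
  have sigma_sets: "sigma_sets (space M) A \<subseteq> sets M"
    using assms(2) by (rule sets.sigma_sets_subset)
  show ?thesis
    using assms(3,4)
  proof (induction arbitrary: e rule: sigma_sets.induct)
    case (Basic a)
    then show ?case by force
  next
    case Empty
    then show ?case by force
  next
    case (Compl a)
    then obtain W' where W': "W' \<in> A" "measure M (sym_diff a W') < e" by blast
    have "sym_diff (space M - a) (space M - W') \<subseteq> sym_diff a W'" by blast
    then have "measure M (sym_diff (space M - a) (space M - W')) \<le> measure M (sym_diff a W')"
      using Compl.hyps W'(1) assms(2) sigma_sets by (intro finite_measure_mono) auto
    moreover have "space M - W' \<in> A"
      using W'(1) by blast
    ultimately show ?case
      using W'(2) by (meson bexI le_less_trans)
  next
    case (Union a)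
    have a_sets: "a i \<in> sets M" for i
      using Union.hyps sigma_sets by blast
    obtain n where n: "measure M (\<Union>i. a i) - measure M (\<Union>i<n. a i) < e/2"
      using measure_UN_approx_by_finite_UN[of a "e/2"] a_sets \<open>0 < e\<close> by auto
    define d where "d = e / (2 * (real n + 1))"
    have "0 < d" unfolding d_def using \<open>0 < e\<close> by simp
    then obtain W where W: "\<And>i. W i \<in> A" "\<And>i. measure M (sym_diff (a i) (W i)) < d"
      using Union.IH by metis
    have W_sets: "W i \<in> sets M" for i
      using W(1) assms(2) by blast
    have "sym_diff (\<Union>i. a i) (\<Union>i<n. W i) \<subseteq> ((\<Union>i. a i) - (\<Union>i<n. a i)) \<union> (\<Union>i<n. sym_diff (a i) (W i))"
      by blast
    then have "measure M (sym_diff (\<Union>i. a i) (\<Union>i<n. W i))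
        \<le> measure M ((\<Union>i. a i) - (\<Union>i<n. a i)) + measure M (\<Union>i<n. sym_diff (a i) (W i))"
      using a_sets W_sets by (intro order_trans[OF finite_measure_mono measure_subadditive]) auto
    also have "\<dots> \<le> (measure M (\<Union>i. a i) - measure M (\<Union>i<n. a i))
        + (\<Sum>i<n. measure M (sym_diff (a i) (W i)))"
      using a_sets W_sets by (intro add_mono measure_UNION_le) (auto simp: finite_measure_Diff' Int_absorb1 UN_mono)
    also have "\<dots> < e/2 + real n * d"
      using n W(2) sum_mono[of "{..<n}" "\<lambda>i. measure M (sym_diff (a i) (W i))" "\<lambda>_. d"]
      by (simp add: less_imp_le)
    also have "\<dots> \<le> e"
      using \<open>0 < e\<close> unfolding d_def by (simp add: field_simps)
    finally show ?case
      using W(1) by blast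
  qed
qed

lemma algebra_Union_incseq:
  assumes "incseq C" "\<And>k. algebra \<Omega> (C k)"
  shows "algebra \<Omega> (\<Union>k. C k)"
proof -
  have C: "C k \<subseteq> Pow \<Omega>" "{} \<in> C k" "\<And>a. a \<in> C k \<Longrightarrow> \<Omega> - a \<in> C k"
    "\<And>a b. a \<in> C k \<Longrightarrow> b \<in> C k \<Longrightarrow> a \<union> b \<in> C k" for k
    using assms(2)[of k, unfolded algebra_iff_Un] by simp_all
  have "a \<union> b \<in> C (max i j)" if "a \<in> C i" "b \<in> C j" for a b i j
    using C(4) that monoD[OF assms(1), of i "max i j"] monoD[OF assms(1), of j "max i j"]
    by (simp add: subset_iff)
  then show ?thesis
    unfolding algebra_iff_Un using C(1-3) by (auto simp: UN_subset_iff; blast)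
qed

lemma (in finite_measure) sigma_sets_approx_by_incseq_algebras:
  assumes "incseq C" "\<And>k. algebra (space M) (C k)" "\<And>k. C k \<subseteq> sets M"
    and "W \<in> sigma_sets (space M) (\<Union>k. C k)" "0 < e"
  shows "\<exists>K. \<forall>k\<ge>K. \<exists>W'\<in>C k. measure M (sym_diff W W') < e"
proof -
  obtain K W' where "W' \<in> C K" "measure M (sym_diff W W') < e"
    using sigma_sets_approx_by_algebra[OF algebra_Union_incseq[OF assms(1,2)] _ assms(4,5)] assms(3)
    by blast
  then show ?thesis
    using monoD[OF assms(1)] by blast
qed

lemma coord_in_unit_interval:
  assumes "sets M = sets seq_space" "\<omega> \<in> space M"
  shows "coord t \<omega> \<in> {0..1}"
proof -
  have "space M = (\<Pi>\<^sub>E i\<in>UNIV. {0..1::real})"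
    using sets_eq_imp_space_eq[OF assms(1)]
    by (simp add: seq_space_def space_PiM space_restrict_space)
  then show ?thesis
    using assms(2) unfolding coord_def by auto
qed

lemma coord_borel_measurable:
  assumes "sets M = sets seq_space"
  shows "coord t \<in> borel_measurable M"
proof -
  have "(\<lambda>\<omega>. \<omega> (t - 1)) \<in> measurable seq_space (restrict_space borel {0..1::real})"
    unfolding seq_space_def by (rule measurable_component_singleton) simp
  moreover have "(\<lambda>x. x) \<in> measurable (restrict_space borel {0..1::real}) borel"
    by (rule measurable_restrict_space1) simp
  ultimately have "(\<lambda>\<omega>. \<omega> (t - 1)) \<in> borel_measurable seq_space"
    using measurable_comp[unfolded comp_def] by blast
  then show ?thesis
    unfolding coord_def measurable_cong_sets[OF assms refl] .
qed

lemma sigma_gen_subset_sets: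
  assumes "sets M = sets seq_space"
  shows "sigma_gen M T \<subseteq> sets M"
  unfolding sigma_gen_def
  using coord_borel_measurable[OF assms] by (intro sets.sigma_sets_subset) (auto simp: measurable_def)

text \<open>The events \<open>cyl_events M s k l\<close> are exactly the events
  \<open>{(X_s, ..., X_{s+k-1}) \<in> A}\<close> with \<open>A \<in> dyad_sets k l\<close>
  (lemma \<open>block_events_eq_cyl_events\<close>); describing them through the vector of dyadic
  indices makes their algebra structure and monotonicity in \<open>k\<close> and \<open>l\<close> evident.\<close>

definition dyad_code :: "nat \<Rightarrow> nat \<Rightarrow> nat \<Rightarrow> (nat \<Rightarrow> real) \<Rightarrow> nat \<Rightarrow> nat" where
  "dyad_code s k l \<omega> = (\<lambda>q\<in>{1..k}. dyad_index l (coord (s + q - 1) \<omega>))"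

definition dyad_codes :: "nat \<Rightarrow> nat \<Rightarrow> (nat \<Rightarrow> nat) set" where
  "dyad_codes k l = {1..k} \<rightarrow>\<^sub>E {0..<2^l}"

definition dyad_cube :: "nat \<Rightarrow> nat \<Rightarrow> (nat \<Rightarrow> nat) \<Rightarrow> (nat \<Rightarrow> real) set" where
  "dyad_cube k l c = (\<Pi>\<^sub>E q\<in>{1..k}. dyad l (c q))"

definition code_event ::
    "(nat \<Rightarrow> real) measure \<Rightarrow> nat \<Rightarrow> nat \<Rightarrow> nat \<Rightarrow> (nat \<Rightarrow> nat) set \<Rightarrow> (nat \<Rightarrow> real) set" where
  "code_event M s k l S = {\<omega>\<in>space M. dyad_code s k l \<omega> \<in> S}"

definition cyl_events :: "(nat \<Rightarrow> real) measure \<Rightarrow> nat \<Rightarrow> nat \<Rightarrow> nat \<Rightarrow> (nat \<Rightarrow> real) set set" where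
  "cyl_events M s k l = range (code_event M s k l)"

lemma dyad_code_in_codes: "dyad_code s k l \<omega> \<in> dyad_codes k l"
  unfolding dyad_code_def dyad_codes_def using dyad_index_less by auto

lemma dyad_code_eq_iff:
  assumes "sets M = sets seq_space" "\<omega> \<in> space M" "c \<in> dyad_codes k l"
  shows "dyad_code s k l \<omega> = c \<longleftrightarrow> (\<forall>q\<in>{1..k}. coord (s + q - 1) \<omega> \<in> dyad l (c q))"
proof
  assume "dyad_code s k l \<omega> = c"
  then show "\<forall>q\<in>{1..k}. coord (s + q - 1) \<omega> \<in> dyad l (c q)"
    unfolding dyad_code_def using dyad_index_mem coord_in_unit_interval[OF assms(1,2)] by auto
next
  assume "\<forall>q\<in>{1..k}. coord (s + q - 1) \<omega> \<in> dyad l (c q)"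
  moreover have "c q < 2^l" if "q \<in> {1..k}" for q
    using assms(3) that unfolding dyad_codes_def by auto
  ultimately have "c q = dyad_index l (coord (s + q - 1) \<omega>)" if "q \<in> {1..k}" for q
    using that by (simp add: dyad_index_unique)
  then have "dyad_code s k l \<omega> q = c q" for q
    using assms(3) unfolding dyad_code_def dyad_codes_def
    by (cases "q \<in> {1..k}") (auto simp: PiE_def extensional_def)
  then show "dyad_code s k l \<omega> = c" ..
qed

lemma block_in_dyad_cube_iff:
  assumes "sets M = sets seq_space" "\<omega> \<in> space M" "c \<in> dyad_codes k l"
  shows "block s k \<omega> \<in> dyad_cube k l c \<longleftrightarrow> dyad_code s k l \<omega> = c"
  unfolding dyad_code_eq_iff[OF assms] block_def dyad_cube_def by (auto simp: PiE_iff)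

lemma dyad_cubes_eq_image: "dyad_cubes k l = dyad_cube k l ` dyad_codes k l"
  unfolding dyad_cubes_def dyad_cube_def dyad_codes_def by auto

lemma finite_dyad_sets: "finite (dyad_sets k l)"
proof -
  have "dyad_sets k l = Union ` Pow (dyad_cubes k l)"
    unfolding dyad_sets_def by auto
  then show ?thesis
    by (simp add: dyad_cubes_eq_image dyad_codes_def finite_PiE)
qed

lemma block_events_eq_cyl_events:
  assumes "sets M = sets seq_space"
  shows "(\<lambda>A. {\<omega>\<in>space M. block s k \<omega> \<in> A}) ` dyad_sets k l = cyl_events M s k l"
proof -
  have event_eq: "{\<omega>\<in>space M. block s k \<omega> \<in> \<Union>(dyad_cube k l ` S)} = code_event M s k l S"
    if "S \<subseteq> dyad_codes k l" for S
  proof -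
    have "block s k \<omega> \<in> \<Union>(dyad_cube k l ` S) \<longleftrightarrow> (\<exists>c\<in>S. dyad_code s k l \<omega> = c)"
      if "\<omega> \<in> space M" for \<omega>
      using \<open>S \<subseteq> dyad_codes k l\<close> block_in_dyad_cube_iff[OF assms that] by (auto simp: subset_iff)
    then show ?thesis
      unfolding code_event_def by blast
  qed
  have "dyad_sets k l = (\<lambda>S. \<Union>(dyad_cube k l ` S)) ` Pow (dyad_codes k l)"
    unfolding dyad_sets_def dyad_cubes_eq_image by (auto simp: subset_image_iff)
  then have "(\<lambda>A. {\<omega>\<in>space M. block s k \<omega> \<in> A}) ` dyad_sets k l
      = code_event M s k l ` Pow (dyad_codes k l)"
    using event_eq by (simp add: image_image)
  also have "\<dots> = cyl_events M s k l"
  proof -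
    have "code_event M s k l S = code_event M s k l (S \<inter> dyad_codes k l)" for S
      unfolding code_event_def using dyad_code_in_codes by blast
    then show ?thesis
      unfolding cyl_events_def by auto
  qed
  finally show ?thesis .
qed

lemma cyl_events_subset_Pow: "cyl_events M s k l \<subseteq> Pow (space M)"
  unfolding cyl_events_def code_event_def by auto

lemma empty_in_cyl_events: "{} \<in> cyl_events M s k l"
  unfolding cyl_events_def code_event_def by (auto intro: range_eqI[of _ _ "{}"])

lemma algebra_cyl_events: "algebra (space M) (cyl_events M s k l)"
  unfolding algebra_iff_Un
proof (intro conjI ballI)
  show "cyl_events M s k l \<subseteq> Pow (space M)"
    by (rule cyl_events_subset_Pow)
  show "{} \<in> cyl_events M s k l"
    by (rule empty_in_cyl_events)
next
  fix A assume "A \<in> cyl_events M s k l"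
  then obtain S where "A = code_event M s k l S"
    unfolding cyl_events_def by blast
  then have "space M - A = code_event M s k l (- S)"
    unfolding code_event_def by auto
  then show "space M - A \<in> cyl_events M s k l"
    unfolding cyl_events_def by blast
next
  fix A B assume "A \<in> cyl_events M s k l" "B \<in> cyl_events M s k l"
  then obtain S T where "A = code_event M s k l S" "B = code_event M s k l T"
    unfolding cyl_events_def by blast
  then have "A \<union> B = code_event M s k l (S \<union> T)"
    unfolding code_event_def by auto
  then show "A \<union> B \<in> cyl_events M s k l"
    unfolding cyl_events_def by blast
qed

lemma cyl_events_mono:
  assumes "sets M = sets seq_space" "k \<le> k'" "l \<le> l'"
  shows "cyl_events M s k l \<subseteq> cyl_events M s k' l'"
proof -
  define coarsen where "coarsen c = (\<lambda>q\<in>{1..k}. c q div 2^(l' - l))" for c :: "nat \<Rightarrow> nat"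
  have "coarsen (dyad_code s k' l' \<omega>) = dyad_code s k l \<omega>" if "\<omega> \<in> space M" for \<omega>
    using assms(2) dyad_index_div[OF _ _ assms(3)] coord_in_unit_interval[OF assms(1) that]
    unfolding coarsen_def dyad_code_def by auto
  then have "code_event M s k l S = code_event M s k' l' (coarsen -` S)" for S
    unfolding code_event_def by auto
  then show ?thesis
    unfolding cyl_events_def by auto
qed

lemma code_event_eq_Collect:
  assumes "sets M = sets seq_space"
  shows "code_event M s k l S = {\<omega>\<in>space M. \<exists>c\<in>S \<inter> dyad_codes k l.
      \<forall>q\<in>{1..k}. coord (s + q - 1) \<omega> \<in> dyad l (c q)}"
proof -
  have "dyad_code s k l \<omega> \<in> S \<longleftrightarrow> (\<exists>c\<in>S \<inter> dyad_codes k l.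
      \<forall>q\<in>{1..k}. coord (s + q - 1) \<omega> \<in> dyad l (c q))" if "\<omega> \<in> space M" for \<omega>
  proof -
    have "dyad_code s k l \<omega> \<in> S \<longleftrightarrow> (\<exists>c\<in>S \<inter> dyad_codes k l. dyad_code s k l \<omega> = c)"
      using dyad_code_in_codes by blast
    also have "\<dots> \<longleftrightarrow> (\<exists>c\<in>S \<inter> dyad_codes k l. \<forall>q\<in>{1..k}. coord (s + q - 1) \<omega> \<in> dyad l (c q))"
      using dyad_code_eq_iff[OF assms(1) that] by (intro bex_cong) auto
    finally show ?thesis .
  qed
  then show ?thesis
    unfolding code_event_def by auto
qed

lemma cyl_events_subset_sigma_gen:
  assumes "sets M = sets seq_space" "{s..<s + k} \<subseteq> T"
  shows "cyl_events M s k l \<subseteq> sigma_gen M T"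
proof
  fix A assume "A \<in> cyl_events M s k l"
  then obtain S where A: "A = code_event M s k l S"
    unfolding cyl_events_def by blast
  interpret sigma_algebra "space M" "sigma_gen M T"
    unfolding sigma_gen_def by (rule sigma_algebra_sigma_sets) auto
  have "code_event M s k l S = {\<omega>\<in>space M. \<exists>c\<in>S \<inter> dyad_codes k l.
      \<forall>q\<in>{1..k}. coord (s + q - 1) \<omega> \<in> dyad l (c q)}"
    by (rule code_event_eq_Collect[OF assms(1)])
  moreover have "{\<omega>\<in>space M. coord (s + q - 1) \<omega> \<in> dyad l i} \<in> sigma_gen M T" if "q \<in> {1..k}" for q i
  proof -
    have "s + q - 1 \<in> {s..<s + k}"
      using that by auto
    then have "s + q - 1 \<in> T"
      using assms(2) by blast
    moreover have "dyad l i \<in> sets borel"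
      unfolding dyad_def by auto
    ultimately show ?thesis
      unfolding sigma_gen_def by (intro sigma_sets.Basic) (auto simp: Int_commute vimage_def)
  qed
  moreover have "finite (S \<inter> dyad_codes k l)"
    unfolding dyad_codes_def by (auto intro: finite_PiE)
  ultimately show "A \<in> sigma_gen M T"
    unfolding A by (auto intro!: sets_Collect_finite_Ex sets_Collect_finite_All)
qed

lemma dyad_index_event_in_cyl_events:
  assumes "s \<le> t" "t < s + k"
  shows "{\<omega>\<in>space M. dyad_index l (coord t \<omega>) \<in> I} \<in> cyl_events M s k l"
proof -
  have "dyad_code s k l \<omega> (t - s + 1) = dyad_index l (coord t \<omega>)" for \<omega>
    unfolding dyad_code_def using assms by auto
  then have "{\<omega>\<in>space M. dyad_index l (coord t \<omega>) \<in> I} = code_event M s k l {c. c (t - s + 1) \<in> I}"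
    unfolding code_event_def by auto
  then show ?thesis
    unfolding cyl_events_def by blast
qed

lemma cyl_events_subset_sets:
  assumes "sets M = sets seq_space"
  shows "cyl_events M s k l \<subseteq> sets M"
  using cyl_events_subset_sigma_gen[OF assms, of s k UNIV] sigma_gen_subset_sets[OF assms] by blast

lemma sigma_gen_subset_sigma_sets:
  assumes "sets M = sets seq_space" "\<And>k. C k \<subseteq> Pow (space M)"
    and "\<And>t l. t \<in> T \<Longrightarrow> \<exists>k. \<forall>I. {\<omega>\<in>space M. dyad_index l (coord t \<omega>) \<in> I} \<in> C k"
  shows "sigma_gen M T \<subseteq> sigma_sets (space M) (\<Union>k. C k)"
proof -
  define N where "N = sigma (space M) (\<Union>k. C k)"
  have "(\<Union>k. C k) \<subseteq> Pow (space M)"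
    using assms(2) by blast
  then have space_N: "space N = space M" and sets_N: "sets N = sigma_sets (space M) (\<Union>k. C k)"
    unfolding N_def by simp_all
  have "coord t \<in> borel_measurable N" if "t \<in> T" for t
    unfolding borel_measurable_iff_le
  proof
    fix a
    have "coord t \<omega> \<le> a \<longleftrightarrow> (\<forall>l. dyad_index l (coord t \<omega>) \<in> {i. real i / 2^l \<le> a})"
      if "\<omega> \<in> space M" for \<omega>
      using le_iff_dyad_lower_bounds coord_in_unit_interval[OF assms(1) that, of t] by simp
    then have "{\<omega>\<in>space N. coord t \<omega> \<le> a}
        = (\<Inter>l. {\<omega>\<in>space M. dyad_index l (coord t \<omega>) \<in> {i. real i / 2^l \<le> a}})"
      unfolding space_N by blast
    also have "\<dots> \<in> sets N"
    proof (intro sets.countable_INT)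
      show "range (\<lambda>l. {\<omega>\<in>space M. dyad_index l (coord t \<omega>) \<in> {i. real i / 2^l \<le> a}}) \<subseteq> sets N"
        using assms(3)[OF that] unfolding sets_N by blast
    qed simp
    finally show "{\<omega>\<in>space N. coord t \<omega> \<le> a} \<in> sets N" .
  qed
  then have "(\<Union>t\<in>T. {coord t -` B \<inter> space M | B. B \<in> sets borel}) \<subseteq> sets N"
    unfolding measurable_def space_N by auto
  then show ?thesis
    unfolding sigma_gen_def sets_N[symmetric] by (rule sets.sigma_sets_subset[of _ N, simplified space_N])
qed

lemma sigma_gen_block_approx:
  assumes "finite_measure M" "sets M = sets seq_space" "U \<in> sigma_gen M {s..<s + k}" "0 < e"
  shows "\<exists>L. \<forall>l\<ge>L. \<exists>U'\<in>cyl_events M s k l. measure M (sym_diff U U') < e"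
proof (rule finite_measure.sigma_sets_approx_by_incseq_algebras[OF assms(1)])
  show "incseq (cyl_events M s k)"
    using cyl_events_mono[OF assms(2) order_refl] by (simp add: incseq_def)
  have "sigma_gen M {s..<s + k} \<subseteq> sigma_sets (space M) (\<Union>l. cyl_events M s k l)"
    using assms(2) cyl_events_subset_Pow
    by (intro sigma_gen_subset_sigma_sets) (auto intro!: exI dyad_index_event_in_cyl_events)
  then show "U \<in> sigma_sets (space M) (\<Union>l. cyl_events M s k l)"
    using assms(3) by blast
qed (use assms(2,4) algebra_cyl_events cyl_events_subset_sets in auto)

lemma sigma_gen_tail_approx:
  assumes "finite_measure M" "sets M = sets seq_space" "V \<in> sigma_gen M {s..}" "0 < e"
  shows "\<exists>K. \<forall>k\<ge>K. \<forall>l\<ge>K. \<exists>V'\<in>cyl_events M s k l. measure M (sym_diff V V') < e"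
proof -
  have "V \<in> sigma_sets (space M) (\<Union>k. cyl_events M s k k)"
  proof -
    have "\<exists>k. \<forall>I. {\<omega>\<in>space M. dyad_index l (coord t \<omega>) \<in> I} \<in> cyl_events M s k k"
      if "s \<le> t" for t l
    proof -
      define k where "k = max (t - s + 1) l"
      have "{\<omega>\<in>space M. dyad_index l (coord t \<omega>) \<in> I} \<in> cyl_events M s k l" for I
        using that by (intro dyad_index_event_in_cyl_events) (auto simp: k_def)
      moreover have "cyl_events M s k l \<subseteq> cyl_events M s k k"
        by (rule cyl_events_mono[OF assms(2)]) (auto simp: k_def)
      ultimately show ?thesis
        by blast
    qed
    then have "sigma_gen M {s..} \<subseteq> sigma_sets (space M) (\<Union>k. cyl_events M s k k)"
      using assms(2) cyl_events_subset_Pow by (intro sigma_gen_subset_sigma_sets) auto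
    then show ?thesis
      using assms(3) by blast
  qed
  then have "\<exists>K. \<forall>k\<ge>K. \<exists>V'\<in>cyl_events M s k k. measure M (sym_diff V V') < e"
    using assms(4) cyl_events_mono[OF assms(2)]
    by (intro finite_measure.sigma_sets_approx_by_incseq_algebras[OF assms(1)])
      (auto simp: incseq_def algebra_cyl_events cyl_events_subset_sets[OF assms(2)])
  then obtain K where K: "\<forall>k\<ge>K. \<exists>V'\<in>cyl_events M s k k. measure M (sym_diff V V') < e" ..
  have "cyl_events M s (min k l) (min k l) \<subseteq> cyl_events M s k l" for k l
    by (rule cyl_events_mono[OF assms(2)]) auto
  then show ?thesis
    using K by (meson min.boundedI subsetD)
qed

definition alpha_pair :: "'a measure \<Rightarrow> 'a set \<Rightarrow> 'a set \<Rightarrow> real" where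
  "alpha_pair M U V = \<bar>measure M (U \<inter> V) - measure M U * measure M V\<bar>"

lemma (in prob_space) alpha_pair_le_one: "alpha_pair M U V \<le> 1"
proof -
  have "0 \<le> measure M U * measure M V" "measure M U * measure M V \<le> 1"
    by (auto intro: mult_le_one)
  then show ?thesis
    unfolding alpha_pair_def abs_le_iff using prob_le_1[of "U \<inter> V"] measure_nonneg[of M "U \<inter> V"]
    by linarith
qed

lemma (in prob_space) alpha_pair_perturb:
  assumes "U \<in> sets M" "V \<in> sets M" "U' \<in> sets M" "V' \<in> sets M"
  shows "alpha_pair M U V
    \<le> alpha_pair M U' V' + 2 * (measure M (sym_diff U U') + measure M (sym_diff V V'))"
proof -
  define dU dV where "dU = measure M (sym_diff U U')" and "dV = measure M (sym_diff V V')"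
  have "\<bar>measure M (U \<inter> V) - measure M (U' \<inter> V')\<bar> \<le> measure M (sym_diff (U \<inter> V) (U' \<inter> V'))"
    using assms by (intro measure_sym_diff_bound) auto
  also have "\<dots> \<le> measure M (sym_diff U U' \<union> sym_diff V V')"
    using assms by (intro finite_measure_mono) auto
  also have "\<dots> \<le> dU + dV"
    unfolding dU_def dV_def using assms by (intro measure_subadditive) auto
  finally have joint: "\<bar>measure M (U \<inter> V) - measure M (U' \<inter> V')\<bar> \<le> dU + dV" .
  have "\<bar>measure M U - measure M U'\<bar> * measure M V \<le> dU"
    using measure_sym_diff_bound[OF assms(1,3)] unfolding dU_def
    by (intro order_trans[OF mult_right_le_one_le]) auto
  moreover have "measure M U' * \<bar>measure M V - measure M V'\<bar> \<le> dV"
    using measure_sym_diff_bound[OF assms(2,4)] unfolding dV_def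
    by (intro order_trans[OF mult_left_le_one_le]) auto
  moreover have "measure M U * measure M V - measure M U' * measure M V'
      = (measure M U - measure M U') * measure M V + measure M U' * (measure M V - measure M V')"
    by (simp add: algebra_simps)
  ultimately have "\<bar>measure M U * measure M V - measure M U' * measure M V'\<bar> \<le> dU + dV"
    by (auto simp: abs_mult intro!: order_trans[OF abs_triangle_ineq])
  then show ?thesis
    using joint unfolding alpha_pair_def dU_def[symmetric] dV_def[symmetric]
    by (simp add: abs_if split: if_splits)
qed

lemma alpha_sigma_eq_SUP: "alpha_sigma M U V = (SUP p\<in>U \<times> V. alpha_pair M (fst p) (snd p))"
  unfolding alpha_sigma_def alpha_pair_def ..

lemma bdd_above_alpha_pair:
  assumes "prob_space M"
  shows "bdd_above ((\<lambda>p. alpha_pair M (fst p) (snd p)) ` X)"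
  using prob_space.alpha_pair_le_one[OF assms] by (intro bdd_aboveI[of _ 1]) auto

lemma alpha_pair_le_alpha_sigma:
  assumes "prob_space M" "U \<in> UU" "V \<in> VV"
  shows "alpha_pair M U V \<le> alpha_sigma M UU VV"
  unfolding alpha_sigma_eq_SUP
  using cSUP_upper[OF _ bdd_above_alpha_pair[OF assms(1)], of "(U, V)" "UU \<times> VV"] assms(2,3) by simp

lemma sigma_gen_nonempty: "sigma_gen M T \<noteq> {}"
  unfolding sigma_gen_def using sigma_sets.Empty by blast

lemma alpha_sigma_le_one:
  assumes "prob_space M" "UU \<noteq> {}" "VV \<noteq> {}"
  shows "alpha_sigma M UU VV \<le> 1"
  unfolding alpha_sigma_eq_SUP
proof (rule cSUP_least)
  show "UU \<times> VV \<noteq> {}"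
    using assms(2,3) by simp
qed (rule prob_space.alpha_pair_le_one[OF assms(1)])

lemma bdd_above_alpha_sigma:
  assumes "prob_space M"
  shows "bdd_above ((\<lambda>j. alpha_sigma M (sigma_gen M {1..j}) (sigma_gen M {j+m..})) ` X)"
  using alpha_sigma_le_one[OF assms sigma_gen_nonempty sigma_gen_nonempty]
  by (intro bdd_aboveI[of _ 1]) blast

lemma alpha_sigma_le_alpha_mix:
  assumes "prob_space M" "1 \<le> j"
  shows "alpha_sigma M (sigma_gen M {1..j}) (sigma_gen M {j+m..}) \<le> alpha_mix M m"
  unfolding alpha_mix_def using assms(2) by (intro cSUP_upper bdd_above_alpha_sigma[OF assms(1)]) auto

lemma alpha_mix_approx:
  assumes "prob_space M" "0 < e"
  shows "\<exists>j\<ge>1. \<exists>U\<in>sigma_gen M {1..j}. \<exists>V\<in>sigma_gen M {j+m..}. alpha_mix M m - e < alpha_pair M U V"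
proof -
  have "alpha_mix M m - e < alpha_mix M m"
    using assms(2) by simp
  then have "\<exists>j\<in>{1..}. alpha_mix M m - e < alpha_sigma M (sigma_gen M {1..j}) (sigma_gen M {j+m..})"
    unfolding alpha_mix_def by (subst (asm) less_cSUP_iff[OF _ bdd_above_alpha_sigma[OF assms(1)]]) auto
  then obtain j where "1 \<le> j" "alpha_mix M m - e < alpha_sigma M (sigma_gen M {1..j}) (sigma_gen M {j+m..})"
    by auto
  moreover have "sigma_gen M {1..j} \<times> sigma_gen M {j+m..} \<noteq> {}"
    using sigma_gen_nonempty by blast
  ultimately have "\<exists>p\<in>sigma_gen M {1..j} \<times> sigma_gen M {j+m..}. alpha_mix M m - e < alpha_pair M (fst p) (snd p)"
    unfolding alpha_sigma_eq_SUP by (subst (asm) less_cSUP_iff[OF _ bdd_above_alpha_pair[OF assms(1)]])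
  then show ?thesis
    using \<open>1 \<le> j\<close> by auto
qed

lemma finite_cyl_events:
  assumes "sets M = sets seq_space"
  shows "finite (cyl_events M s k l)"
  unfolding block_events_eq_cyl_events[OF assms, symmetric] by (rule finite_imageI[OF finite_dyad_sets])

lemma alpha_dyad_nj_eq:
  assumes "sets M = sets seq_space"
  shows "alpha_dyad_nj M l m n j = Max ((\<lambda>(U, V). alpha_pair M U V)
    ` (cyl_events M 1 j l \<times> cyl_events M (j + m) (n - m - j + 1) l))"
  unfolding alpha_dyad_nj_def Let_def alpha_pair_def
  by (simp flip: block_events_eq_cyl_events[OF assms] map_prod_image add: image_image case_prod_beta)

lemma alpha_pair_le_alpha_dyad:
  assumes "sets M = sets seq_space" "1 \<le> j" "j \<le> n - m"
    and "U \<in> cyl_events M 1 j l" "V \<in> cyl_events M (j + m) (n - m - j + 1) l"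
  shows "alpha_pair M U V \<le> alpha_dyad M l m n"
proof -
  have "alpha_pair M U V \<le> alpha_dyad_nj M l m n j"
    unfolding alpha_dyad_nj_eq[OF assms(1)]
  proof (rule Max_ge)
    show "finite ((\<lambda>(U, V). alpha_pair M U V) ` (cyl_events M 1 j l \<times> cyl_events M (j + m) (n - m - j + 1) l))"
      using finite_cyl_events[OF assms(1)] by simp
    show "alpha_pair M U V \<in> (\<lambda>(U, V). alpha_pair M U V) ` (cyl_events M 1 j l \<times> cyl_events M (j + m) (n - m - j + 1) l)"
      using assms(4,5) by (intro image_eqI[of _ _ "(U, V)"]) simp_all
  qed
  also have "\<dots> \<le> alpha_dyad M l m n"
    unfolding alpha_dyad_def using assms(2,3) by (intro Max_ge) auto
  finally show ?thesis .
qed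

lemma alpha_dyad_le_alpha_mix:
  assumes "prob_space M" "sets M = sets seq_space" "m < n"
  shows "alpha_dyad M l m n \<le> alpha_mix M m"
proof -
  have "alpha_dyad_nj M l m n j \<le> alpha_mix M m" if j: "j \<in> {1..n - m}" for j
    unfolding alpha_dyad_nj_eq[OF assms(2)]
  proof (rule Max.boundedI)
    show "finite ((\<lambda>(U, V). alpha_pair M U V) ` (cyl_events M 1 j l \<times> cyl_events M (j + m) (n - m - j + 1) l))"
      using finite_cyl_events[OF assms(2)] by simp
    show "(\<lambda>(U, V). alpha_pair M U V) ` (cyl_events M 1 j l \<times> cyl_events M (j + m) (n - m - j + 1) l) \<noteq> {}"
      using empty_in_cyl_events by blast
  next
    fix x assume "x \<in> (\<lambda>(U, V). alpha_pair M U V) ` (cyl_events M 1 j l \<times> cyl_events M (j + m) (n - m - j + 1) l)"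
    then obtain U V where x: "x = alpha_pair M U V"
      and UV: "U \<in> cyl_events M 1 j l" "V \<in> cyl_events M (j + m) (n - m - j + 1) l"
      by auto
    have "U \<in> sigma_gen M {1..j}"
      using UV(1) cyl_events_subset_sigma_gen[OF assms(2), of 1 j "{1..j}"]
      by (auto simp: atLeastLessThanSuc_atLeastAtMost)
    moreover have "V \<in> sigma_gen M {j+m..}"
      using UV(2) cyl_events_subset_sigma_gen[OF assms(2), of "j + m" _ "{j+m..}"] by fastforce
    ultimately have "alpha_pair M U V \<le> alpha_sigma M (sigma_gen M {1..j}) (sigma_gen M {j+m..})"
      by (rule alpha_pair_le_alpha_sigma[OF assms(1)])
    also have "\<dots> \<le> alpha_mix M m"
      using j by (intro alpha_sigma_le_alpha_mix[OF assms(1)]) auto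
    finally show "x \<le> alpha_mix M m"
      unfolding x .
  qed
  then show ?thesis
    unfolding alpha_dyad_def using assms(3) by (intro Max.boundedI) auto
qed

lemma alpha_dyad_eventually_gt:
  assumes "prob_space M" "sets M = sets seq_space" "0 < e"
  shows "\<exists>N. \<forall>n\<ge>N. \<forall>l\<ge>N. alpha_mix M m - e < alpha_dyad M l m n"
proof -
  interpret prob_space M by fact
  have "0 < e/8"
    using assms(3) by simp
  have "\<exists>j\<ge>1. \<exists>U\<in>sigma_gen M {1..j}. \<exists>V\<in>sigma_gen M {j+m..}. alpha_mix M m - e/2 < alpha_pair M U V"
    using assms(3) by (intro alpha_mix_approx[OF assms(1)]) simp
  then obtain j U V where j: "1 \<le> j" and UV: "U \<in> sigma_gen M {1..j}" "V \<in> sigma_gen M {j+m..}"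
    and close: "alpha_mix M m - e/2 < alpha_pair M U V"
    by blast
  have "U \<in> sigma_gen M {1..<1 + j}"
    using UV(1) by (simp add: atLeastLessThanSuc_atLeastAtMost)
  then obtain L where L: "\<forall>l\<ge>L. \<exists>U'\<in>cyl_events M 1 j l. measure M (sym_diff U U') < e/8"
    using sigma_gen_block_approx[OF finite_measure_axioms assms(2) _ \<open>0 < e/8\<close>] by blast
  obtain K where K: "\<forall>k\<ge>K. \<forall>l\<ge>K. \<exists>V'\<in>cyl_events M (j + m) k l. measure M (sym_diff V V') < e/8"
    using sigma_gen_tail_approx[OF finite_measure_axioms assms(2) UV(2) \<open>0 < e/8\<close>] by blast
  have "alpha_mix M m - e < alpha_dyad M l m n" if large: "L + K + j + m \<le> n" "L + K + j + m \<le> l" for n l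
  proof -
    have "L \<le> l" "K \<le> l" "K \<le> n - m - j + 1"
      using large by simp_all
    then obtain U' V' where U': "U' \<in> cyl_events M 1 j l" "measure M (sym_diff U U') < e/8"
      and V': "V' \<in> cyl_events M (j + m) (n - m - j + 1) l" "measure M (sym_diff V V') < e/8"
      using L K by blast
    have "U \<in> sets M" "V \<in> sets M" "U' \<in> sets M" "V' \<in> sets M"
      using UV U'(1) V'(1) sigma_gen_subset_sets[OF assms(2)] cyl_events_subset_sets[OF assms(2)] by blast+
    then have "alpha_pair M U V
        \<le> alpha_pair M U' V' + 2 * (measure M (sym_diff U U') + measure M (sym_diff V V'))"
      by (rule alpha_pair_perturb)
    also have "\<dots> < alpha_dyad M l m n + e/2"
    proof -
      have "j \<le> n - m"
        using large by simp
      then show ?thesis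
        using alpha_pair_le_alpha_dyad[OF assms(2) j _ U'(1) V'(1)] U'(2) V'(2) by simp
    qed
    finally show ?thesis
      using close by simp
  qed
  then show ?thesis
    by blast
qed

theorem proposition1:
  fixes M :: "(nat \<Rightarrow> real) measure" and m :: nat
  assumes "prob_space M"
    and "sets M = sets seq_space"
    and "stationary M"
    and "ergodic M"
    and "m \<ge> 1"
  shows "((\<lambda>(n, l). alpha_dyad M l m n) \<longlongrightarrow> alpha_mix M m) (sequentially \<times>\<^sub>F sequentially)"
proof (rule tendstoI)
  fix e :: real assume "0 < e"
  then obtain N where N: "\<forall>n\<ge>N. \<forall>l\<ge>N. alpha_mix M m - e < alpha_dyad M l m n"
    using alpha_dyad_eventually_gt[OF assms(1,2)] by blast
  have "dist (alpha_dyad M l m n) (alpha_mix M m) < e" if "N + m + 1 \<le> n" "N + m + 1 \<le> l" for n l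
    using N[rule_format, of n l] alpha_dyad_le_alpha_mix[OF assms(1,2), of m n l] that
    by (simp add: dist_real_def)
  then show "\<forall>\<^sub>F x in sequentially \<times>\<^sub>F sequentially. dist ((\<lambda>(n, l). alpha_dyad M l m n) x) (alpha_mix M m) < e"
    unfolding eventually_prod_sequentially by auto
qed

end
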